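(* Let $(\mathbf f,\mathbf g)$ be a vector admissible system with potential $U$. For $(\mathbf x,\epsilon)\in\mathcal X\times\mathcal E$ let $\mathbf y=\mathbf f(\mathbf g(\mathbf x);\epsilon)$. If $\mathbf x\preceq\mathbf y$ or $\mathbf x\succeq\mathbf y$, then $U(\mathbf x;\epsilon)\ge U(\mathbf y;\epsilon)$.
   Context: Let $d\in\mathbb N$, $\mathcal X=[0,1]^d$, $\mathcal E=[0,1]$, $\mathcal X^\circ=\mathcal X\setminus\{\mathbf 0\}$. Vectors are row vectors; $\mathbf x\preceq\mathbf y$ means $x_i\le y_i$ for all $i$. For a vector-valued function $\mathbf h$ of $\mathbf x$, $\mathbf h'(\mathbf x)$ denotes its Jacobian matrix $[\partial h_i/\partial x_j]_{i,j}$; for a scalar function $F(\mathbf x;\epsilon)$, $F'(\mathbf x;\epsilon)$ denotes its gradient in $\mathbf x$ (a row vector). Let $\mathbf D$ be a $d\times d$ diagonal matrix with positive diagonal entries, $\mathbf f:\mathcal X\times\mathcal E\to\mathcal X$, $\mathbf g:\mathcal X\to\mathcal X$, and $F:\mathcal X\times\mathcal E\to\mathbb R$, $G:\mathcal X\to\mathbb R$ functionals with $F'(\mathbf x;\epsilon)=\mathbf f(\mathbf x;\epsilon)\mathbf D$ and $G'(\mathbf x)=\mathbf g(\mathbf x)\mathbf D$, normalized so that $F(\mathbf 0;\epsilon)=G(\mathbf 0)=0$. The pair $(\mathbf f,\mathbf g)$ is a vector admissible system if: (i) $\mathbf f,\mathbf g$ are twice continuously differentiable; (ii) $\mathbf f(\mathbf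 x;\epsilon)$ and $\mathbf g(\mathbf x)$ are non-decreasing in $\mathbf x$ with respect to $\preceq$; (iii) for each $\mathbf x\in\mathcal X^\circ$, $\mathbf f(\mathbf x;\epsilon)$ is strictly increasing in $\epsilon$, i.e. $\epsilon_1<\epsilon_2$ implies $\mathbf f(\mathbf x;\epsilon_1)\preceq\mathbf f(\mathbf x;\epsilon_2)$ and $\mathbf f(\mathbf x;\epsilon_1)\neq\mathbf f(\mathbf x;\epsilon_2)$; (iv) $\mathbf f(\mathbf 0;\epsilon)=\mathbf f(\mathbf x;0)=\mathbf g(\mathbf 0)=\mathbf 0$ and $F(\mathbf x;0)=0$. The associated recursion is $\mathbf x^{(\ell+1)}=\mathbf f(\mathbf g(\mathbf x^{(\ell)});\epsilon)$. The potential function is $U(\mathbf x;\epsilon)=\mathbf g(\mathbf x)\mathbf D\mathbf x^{\mathsf T}-G(\mathbf x)-F(\mathbf g(\mathbf x);\epsilon)$. *)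

theory Defs
  imports "HOL-Analysis.Analysis"
begin

text \<open>Vectors in [0,1]^d are modelled as real^'n (d = CARD('n)); row vector times
matrix is v*; the componentwise order is vle.\<close>

definition vle :: "real^'n \<Rightarrow> real^'n \<Rightarrow> bool" where
  "vle x y \<longleftrightarrow> (\<forall>i. x $ i \<le> y $ i)"

definition cubeX :: "(real^'n) set" where
  "cubeX = {x. \<forall>i. 0 \<le> x $ i \<and> x $ i \<le> 1}"

definition cubeE :: "real set" where
  "cubeE = {0..1}"

definition C2_on :: "('a::real_normed_vector \<Rightarrow> 'b::real_normed_vector) \<Rightarrow> 'a set \<Rightarrow> bool" where
  "C2_on h S \<longleftrightarrow> (\<exists>(h' :: 'a \<Rightarrow> 'a \<Rightarrow>\<^sub>L 'b) (h'' :: 'a \<Rightarrow> 'a \<Rightarrow>\<^sub>L ('a \<Rightarrow>\<^sub>L 'b)).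
      (\<forall>x\<in>S. (h has_derivative blinfun_apply (h' x)) (at x within S)) \<and>
      (\<forall>x\<in>S. (h' has_derivative blinfun_apply (h'' x)) (at x within S)) \<and>
      continuous_on S h'')"

definition positive_diagonal :: "real^'n^'n \<Rightarrow> bool" where
  "positive_diagonal D \<longleftrightarrow> (\<forall>i j. i \<noteq> j \<longrightarrow> D $ i $ j = 0) \<and> (\<forall>i. D $ i $ i > 0)"

definition vector_admissible ::
  "real^'n^'n \<Rightarrow> (real^'n \<Rightarrow> real \<Rightarrow> real^'n) \<Rightarrow> (real^'n \<Rightarrow> real^'n)
     \<Rightarrow> (real^'n \<Rightarrow> real \<Rightarrow> real) \<Rightarrow> (real^'n \<Rightarrow> real) \<Rightarrow> bool" where
  "vector_admissible D f g F G \<longleftrightarrow>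
     positive_diagonal D \<and>
     (\<forall>x\<in>cubeX. \<forall>e\<in>cubeE. f x e \<in> cubeX) \<and>
     (\<forall>x\<in>cubeX. g x \<in> cubeX) \<and>
     \<comment> \<open>potentials: F' = f D, G' = g D, normalised at 0\<close>
     (\<forall>e\<in>cubeE. \<forall>x\<in>cubeX. ((\<lambda>z. F z e) has_derivative (\<lambda>h. (f x e v* D) \<bullet> h)) (at x within cubeX)) \<and>
     (\<forall>x\<in>cubeX. (G has_derivative (\<lambda>h. (g x v* D) \<bullet> h)) (at x within cubeX)) \<and>
     (\<forall>e\<in>cubeE. F 0 e = 0) \<and> G 0 = 0 \<and>
     \<comment> \<open>(i)\<close>
     C2_on (\<lambda>p. f (fst p) (snd p)) (cubeX \<times> cubeE) \<and>
     C2_on g cubeX \<and>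
     \<comment> \<open>(ii)\<close>
     (\<forall>e\<in>cubeE. \<forall>x\<in>cubeX. \<forall>y\<in>cubeX. vle x y \<longrightarrow> vle (f x e) (f y e)) \<and>
     (\<forall>x\<in>cubeX. \<forall>y\<in>cubeX. vle x y \<longrightarrow> vle (g x) (g y)) \<and>
     \<comment> \<open>(iii)\<close>
     (\<forall>x\<in>cubeX - {0}. \<forall>e1\<in>cubeE. \<forall>e2\<in>cubeE. e1 < e2 \<longrightarrow>
         vle (f x e1) (f x e2) \<and> f x e1 \<noteq> f x e2) \<and>
     \<comment> \<open>(iv)\<close>
     (\<forall>e\<in>cubeE. f 0 e = 0) \<and> (\<forall>x\<in>cubeX. f x 0 = 0) \<and> g 0 = 0 \<and>
     (\<forall>x\<in>cubeX. F x 0 = 0)"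

definition potential ::
  "real^'n^'n \<Rightarrow> (real^'n \<Rightarrow> real^'n) \<Rightarrow> (real^'n \<Rightarrow> real \<Rightarrow> real) \<Rightarrow> (real^'n \<Rightarrow> real)
     \<Rightarrow> real^'n \<Rightarrow> real \<Rightarrow> real" where
  "potential D g F G x e = (g x v* D) \<bullet> x - G x - F (g x) e"

end

theory Submission
  imports Defs
begin

text \<open>
  Both potentials G and F(-;e) have gradients of the form h(z) D with
  h monotone for the componentwise order and D positive diagonal.  Along the segment
  between two comparable points a, b the mean value theorem then gives the one-sided
  "convexity" bound  H b - H a \<le> (h b D) \<bullet> (b - a), in whichever order a and b are
  comparable.  Applied once to G (points x, y) and once to F(-;e) (points g x, g y, which
  are comparable because g is monotone), and combined with the symmetry of the bilinear
  form (u D) \<bullet> w, these two bounds add up exactly to U(x;e) \<ge> U(y;e), since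
  f (g x) e = y.
\<close>

lemma diag_form:
  assumes "positive_diagonal D"
  shows "(u v* D) \<bullet> w = (\<Sum>i\<in>UNIV. u$i * D$i$i * w$i)"
proof -
  have col: "(u v* D) $ j = D$j$j * u$j" for j
  proof -
    have "(u v* D) $ j = (\<Sum>i\<in>UNIV. D$i$j * u$i)"
      by (simp add: vector_matrix_mult_def mult.commute)
    also have "\<dots> = (\<Sum>i\<in>UNIV. if i = j then D$j$j * u$j else 0)"
      by (rule sum.cong) (use assms in \<open>auto simp: positive_diagonal_def\<close>)
    finally show ?thesis by simp
  qed
  show ?thesis by (simp add: col inner_vec_def mult.commute mult.left_commute)
qed

lemma diag_sym:
  assumes "positive_diagonal D"
  shows "(u v* D) \<bullet> w = (w v* D) \<bullet> u"
  using assms by (simp add: diag_form mult.commute mult.left_commute)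

lemma diag_mono:
  assumes "positive_diagonal D" "vle u v" "vle 0 w"
  shows "(u v* D) \<bullet> w \<le> (v v* D) \<bullet> w"
  using assms unfolding diag_form[OF assms(1)]
  by (intro sum_mono) (auto simp: vle_def positive_diagonal_def intro!: mult_right_mono)

lemma convex_cubeX: "convex cubeX"
  unfolding cubeX_def convex_def
proof (intro ballI allI impI, safe)
  fix x y :: "real^'n" and u v :: real and i
  assume "\<forall>i. 0 \<le> x $ i \<and> x $ i \<le> 1" "\<forall>i. 0 \<le> y $ i \<and> y $ i \<le> 1"
    and "0 \<le> u" "0 \<le> v" "u + v = 1"
  then show "0 \<le> (u *\<^sub>R x + v *\<^sub>R y) $ i" "(u *\<^sub>R x + v *\<^sub>R y) $ i \<le> 1"
    using convex_bound_le[of "x$i" 1 "y$i" u v] by auto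
qed

lemma segment_between:
  assumes "vle a b" "0 \<le> t" "t \<le> 1"
  shows "vle a (a + t *\<^sub>R (b - a))" "vle (a + t *\<^sub>R (b - a)) b"
proof -
  have "a$i \<le> a$i + t * (b$i - a$i) \<and> a$i + t * (b$i - a$i) \<le> b$i" for i
  proof -
    have "0 \<le> b$i - a$i" using assms(1) by (simp add: vle_def)
    moreover have "t * (b$i - a$i) \<le> 1 * (b$i - a$i)"
      using assms(3) calculation by (intro mult_right_mono) auto
    ultimately show ?thesis using assms(2) by simp
  qed
  then show "vle a (a + t *\<^sub>R (b - a))" "vle (a + t *\<^sub>R (b - a)) b"
    by (auto simp: vle_def)
qed

lemma monotone_gradient_bounds:
  assumes D: "positive_diagonal D" and S: "convex S"
    and der: "\<And>z. z \<in> S \<Longrightarrow> (H has_derivative (\<lambda>h. (h0 z v* D) \<bullet> h)) (at z within S)"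
    and mono: "\<And>u v. u \<in> S \<Longrightarrow> v \<in> S \<Longrightarrow> vle u v \<Longrightarrow> vle (h0 u) (h0 v)"
    and ab: "a \<in> S" "b \<in> S" "vle a b"
  shows "H b - H a \<le> (h0 b v* D) \<bullet> (b - a)" "(h0 a v* D) \<bullet> (b - a) \<le> H b - H a"
proof -
  define p where "p t = a + t *\<^sub>R (b - a)" for t :: real
  have p_in: "p t \<in> S" if "t \<in> {0..1}" for t
    using convexD_alt[OF S ab(1,2), of t] that by (simp add: p_def algebra_simps)
  then have segment_in: "p ` {0..1} \<subseteq> S" by blast
  have "((\<lambda>t. H (p t)) has_derivative (\<lambda>s. (h0 (p t) v* D) \<bullet> (s *\<^sub>R (b - a))))
          (at t within {0..1})" if "t \<in> {0..1}" for t
  proof -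
    have "(p has_derivative (\<lambda>s. s *\<^sub>R (b - a))) (at t within {0..1})"
      unfolding p_def by (auto intro!: derivative_eq_intros)
    from has_derivative_in_compose2[OF der segment_in that this] p_in that
    show ?thesis by simp
  qed
  from mvt_very_simple[of 0 1, OF _ this]
  obtain t where t: "t \<in> {0..1}"
    and "H (p 1) - H (p 0) = (h0 (p t) v* D) \<bullet> ((1 - 0) *\<^sub>R (b - a))"
    by auto
  then have incr: "H b - H a = (h0 (p t) v* D) \<bullet> (b - a)" by (simp add: p_def)
  have nonneg: "vle 0 (b - a)" using ab(3) by (simp add: vle_def)
  have between: "vle a (p t)" "vle (p t) b"
    using segment_between[OF ab(3)] t by (auto simp: p_def)
  show "H b - H a \<le> (h0 b v* D) \<bullet> (b - a)"
    unfolding incr by (rule diag_mono[OF D mono[OF p_in[OF t] ab(2) between(2)] nonneg])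
  show "(h0 a v* D) \<bullet> (b - a) \<le> H b - H a"
    unfolding incr by (rule diag_mono[OF D mono[OF ab(1) p_in[OF t] between(1)] nonneg])
qed

lemma comparable_increment_bound:
  assumes D: "positive_diagonal D" and S: "convex S"
    and der: "\<And>z. z \<in> S \<Longrightarrow> (H has_derivative (\<lambda>h. (h0 z v* D) \<bullet> h)) (at z within S)"
    and mono: "\<And>u v. u \<in> S \<Longrightarrow> v \<in> S \<Longrightarrow> vle u v \<Longrightarrow> vle (h0 u) (h0 v)"
    and ab: "a \<in> S" "b \<in> S" "vle a b \<or> vle b a"
  shows "H b - H a \<le> (h0 b v* D) \<bullet> (b - a)"
  using ab(3)
proof
  assume "vle a b"
  from monotone_gradient_bounds(1)[OF D S der mono ab(1,2) this] show ?thesis .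
next
  assume "vle b a"
  from monotone_gradient_bounds(2)[OF D S der mono ab(2,1) this]
  show ?thesis by (metis inner_minus_right minus_diff_eq le_minus_iff)
qed

theorem lemma2:
  fixes D :: "real^'n^'n" and f :: "real^'n \<Rightarrow> real \<Rightarrow> real^'n" and g :: "real^'n \<Rightarrow> real^'n"
    and F :: "real^'n \<Rightarrow> real \<Rightarrow> real" and G :: "real^'n \<Rightarrow> real"
  assumes "vector_admissible D f g F G"
    and "x \<in> cubeX" and "e \<in> cubeE"
    and "y = f (g x) e"
    and "vle x y \<or> vle y x"
  shows "potential D g F G x e \<ge> potential D g F G y e"
proof -
  note A = assms(1)[unfolded vector_admissible_def]
  have D: "positive_diagonal D" using A by blast
  have gx: "g x \<in> cubeX" using A assms(2) by blast
  have y: "y \<in> cubeX" using A gx assms(3,4) by blast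
  have gy: "g y \<in> cubeX" using A y by blast
  have G_grad: "\<And>z. z \<in> cubeX \<Longrightarrow> (G has_derivative (\<lambda>h. (g z v* D) \<bullet> h)) (at z within cubeX)"
    using A by blast
  have F_grad: "\<And>z. z \<in> cubeX \<Longrightarrow>
      ((\<lambda>z. F z e) has_derivative (\<lambda>h. (f z e v* D) \<bullet> h)) (at z within cubeX)"
    using A assms(3) by blast
  have g_mono: "\<And>u v. u \<in> cubeX \<Longrightarrow> v \<in> cubeX \<Longrightarrow> vle u v \<Longrightarrow> vle (g u) (g v)"
    using A by blast
  have f_mono: "\<And>u v. u \<in> cubeX \<Longrightarrow> v \<in> cubeX \<Longrightarrow> vle u v \<Longrightarrow> vle (f u e) (f v e)"
    using A assms(3) by blast
  have g_comparable: "vle (g y) (g x) \<or> vle (g x) (g y)"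
    using assms(5) g_mono[OF assms(2) y] g_mono[OF y assms(2)] by blast
  have bound_G: "G x - G y \<le> (g x v* D) \<bullet> (x - y)"
    using comparable_increment_bound[OF D convex_cubeX G_grad g_mono y assms(2)] assms(5)
    by blast
  have "F (g x) e - F (g y) e \<le> (f (g x) e v* D) \<bullet> (g x - g y)"
    using comparable_increment_bound[OF D convex_cubeX F_grad f_mono gy gx] g_comparable
    by blast
  then have bound_F: "F (g x) e - F (g y) e \<le> (y v* D) \<bullet> (g x - g y)"
    using assms(4) by simp
  have "(g y v* D) \<bullet> y = (y v* D) \<bullet> g y" "(g x v* D) \<bullet> y = (y v* D) \<bullet> g x"
    by (rule diag_sym[OF D])+
  with bound_G bound_F show ?thesis
    unfolding potential_def by (simp add: inner_diff_right algebra_simps)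
qed

end
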